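(* Let $A=(A_1,A_2)\in V_2$ satisfy $\sigma_{12}(A)\neq 0$. Then $A$ is similar to a pair $B=(B_1,B_2)$ with $B_1^T=B_1$ and $B_2^T=B_2$.
   Context: $V_2=(M_{2\times2}(\mathbb{C}))^{\times 2}$ with $GL(2,\mathbb{C})$ acting by simultaneous conjugation; similar means same orbit. With $t_j=\mathsf{tr}(A_j)$, $t_{jk}=\mathsf{tr}(A_jA_k)$, $\tau_{jk}=t_{jk}-\tfrac12t_jt_k$ and $\sigma_{12}=\tau_{12}^2-\tau_{11}\tau_{22}$. $T$ denotes transposition. *)

theory Defs
  imports "HOL-Analysis.Analysis"
begin

type_synonym mat2 = "complex^2^2"

definition tau2 :: "mat2 \<Rightarrow> mat2 \<Rightarrow> complex" where
  "tau2 X Y = trace (X ** Y) - trace X * trace Y / 2"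

definition sigma12 :: "mat2 \<Rightarrow> mat2 \<Rightarrow> complex" where
  "sigma12 A1 A2 = (tau2 A1 A2)^2 - tau2 A1 A1 * tau2 A2 A2"

definition similar_pair :: "mat2 \<times> mat2 \<Rightarrow> mat2 \<times> mat2 \<Rightarrow> bool" where
  "similar_pair A B \<longleftrightarrow> (\<exists>P::mat2. invertible P \<and>
      fst B = P ** fst A ** matrix_inv P \<and> snd B = P ** snd A ** matrix_inv P)"

end

theory Submission
  imports Defs
begin

text \<open>The commutator Z = A1 A2 - A2 A1 is traceless with det Z = -sigma12, so it is
  invertible and hence similar to a multiple mu J of J = [[0,1],[-1,0]]. A 2x2 matrix N is
  symmetric iff tr (N J) = 0, and tr (A_i Z) = 0 for both i. Conjugating the pair by the
  matrix that takes Z to mu J preserves these traces, so both conjugates are symmetric.\<close>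

lemma matrix_inv_inverse:
  fixes A :: "'a::semiring_1^'n^'n"
  assumes "invertible A"
  shows "A ** matrix_inv A = mat 1" and "matrix_inv A ** A = mat 1"
  using someI_ex[OF assms[unfolded invertible_def]] by (simp_all add: matrix_inv_def)

lemma matrix_conj_mult:
  fixes P A B :: "'a::semiring_1^'n^'n"
  assumes "invertible P"
  shows "(P ** A ** matrix_inv P) ** (P ** B ** matrix_inv P) = P ** (A ** B) ** matrix_inv P"
proof -
  have "(P ** A ** matrix_inv P) ** (P ** B ** matrix_inv P)
      = P ** A ** (matrix_inv P ** P) ** B ** matrix_inv P"
    by (simp only: matrix_mul_assoc)
  also have "\<dots> = P ** (A ** B) ** matrix_inv P"
    by (simp only: matrix_inv_inverse[OF assms] matrix_mul_rid matrix_mul_assoc)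
  finally show ?thesis .
qed

lemma trace_matrix_conj:
  fixes P A :: "'a::comm_semiring_1^'n^'n"
  assumes "invertible P"
  shows "trace (P ** A ** matrix_inv P) = trace A"
proof -
  have "trace (P ** A ** matrix_inv P) = trace (matrix_inv P ** (P ** A))"
    by (rule trace_mul_sym)
  also have "\<dots> = trace A"
    by (simp only: matrix_mul_assoc matrix_inv_inverse[OF assms] matrix_mul_lid)
  finally show ?thesis .
qed

lemma trace_commutator:
  fixes A B :: "'a::comm_ring_1^'n^'n"
  shows "trace (A ** B - B ** A) = 0"
  by (simp add: trace_sub trace_mul_sym[of A B])

lemma matrix_diff_ldistrib:
  fixes A :: "'a::ring_1^'n^'m" and B C :: "'a^'p^'n"
  shows "A ** (B - C) = A ** B - A ** C"
  by (metis add_diff_cancel diff_add_cancel matrix_add_ldistrib)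

lemma trace_mult_commutator:
  fixes A B :: "'a::comm_ring_1^'n^'n"
  shows "trace (A ** (A ** B - B ** A)) = 0" and "trace (B ** (A ** B - B ** A)) = 0"
  by (simp_all add: matrix_diff_ldistrib matrix_mul_assoc trace_sub
      trace_mul_sym[of "A ** B" A] trace_mul_sym[of "B ** A" B])

lemma mat2_eq_iff:
  "(A::mat2) = B \<longleftrightarrow> A$1$1 = B$1$1 \<and> A$1$2 = B$1$2 \<and> A$2$1 = B$2$1 \<and> A$2$2 = B$2$2"
  by (auto simp: vec_eq_iff forall_2)

lemma mat2_mult_nth: "((A::mat2) ** B) $ i $ j = A$i$1 * B$1$j + A$i$2 * B$2$j"
  by (simp add: matrix_matrix_mult_def sum_2)

lemma trace_mat2: "trace (A::mat2) = A$1$1 + A$2$2"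
  by (simp add: trace_def sum_2)

definition skew2 :: "complex \<Rightarrow> mat2" where
  "skew2 \<mu> = vector [vector [0, \<mu>], vector [-\<mu>, 0]]"

lemma symmetric_iff_trace_mult_skew2:
  assumes "\<mu> \<noteq> 0"
  shows "transpose (N::mat2) = N \<longleftrightarrow> trace (N ** skew2 \<mu>) = 0"
  using assms by (auto simp: skew2_def mat2_eq_iff transpose_def trace_mat2 mat2_mult_nth)

lemma det_commutator_mat2: "det (A ** B - B ** A) = - sigma12 A B"
  by (simp add: det_2 trace_mat2 mat2_mult_nth sigma12_def tau2_def power2_eq_square field_simps)

lemma traceless_mat2_similar_skew2:
  fixes Z :: mat2
  assumes "trace Z = 0" and "det Z \<noteq> 0"
  obtains P \<mu> where "\<mu> \<noteq> 0" and "invertible P" and "P ** Z ** matrix_inv P = skew2 \<mu>"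
proof -
  define a b c where "a = Z$1$1" and "b = Z$1$2" and "c = Z$2$1"
  have Z22: "Z$2$2 = - a"
    using assms(1) by (simp add: trace_mat2 a_def eq_neg_iff_add_eq_0 add.commute)
  define \<mu> where "\<mu> = csqrt (det Z)"
  have \<mu>_sq: "\<mu>^2 = -(a^2) - b * c"
    using Z22 by (simp add: \<mu>_def det_2 a_def b_def c_def) (simp add: power2_eq_square)
  have "\<mu> \<noteq> 0"
    using assms(2) by (simp add: \<mu>_def)
  obtain p q where pq: "b*p^2 - 2*a*p*q - c*q^2 \<noteq> 0"
  proof (cases "b = 0 \<and> c = 0")
    case True
    then have "a \<noteq> 0"
      using assms(2) Z22 by (simp add: det_2 a_def b_def c_def)
    with True that[of 1 1] show ?thesis by simp
  next
    case False
    with that[of 1 0] that[of 0 1] show ?thesis by auto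
  qed
  \<comment> \<open>Rows mu v and v Z for v = (p, q): since Z^2 = -mu^2 I this intertwines Z with skew2 mu,
    and it is invertible because pq says exactly that v is not a left eigenvector of Z.\<close>
  define P :: mat2 where "P = vector [vector [\<mu>*p, \<mu>*q], vector [p*a + q*c, p*b - q*a]]"
  have "det P = \<mu> * (b*p^2 - 2*a*p*q - c*q^2)"
    by (simp add: P_def det_2 algebra_simps power2_eq_square)
  with \<open>\<mu> \<noteq> 0\<close> pq have "invertible P"
    by (simp add: invertible_det_nz)
  have "P ** Z = skew2 \<mu> ** P"
    unfolding mat2_eq_iff mat2_mult_nth
    by (simp add: P_def skew2_def Z22 a_def [symmetric] b_def [symmetric] c_def [symmetric]
        algebra_simps) (use \<mu>_sq in algebra)
  then have "P ** Z ** matrix_inv P = skew2 \<mu>"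
    by (simp add: matrix_mul_assoc [symmetric] matrix_inv_inverse[OF \<open>invertible P\<close>])
  with \<open>\<mu> \<noteq> 0\<close> \<open>invertible P\<close> that show ?thesis by blast
qed

theorem proposition2p12:
  fixes A1 A2 :: mat2
  assumes "sigma12 A1 A2 \<noteq> 0"
  shows "\<exists>B1 B2 :: mat2. similar_pair (A1, A2) (B1, B2) \<and>
           transpose B1 = B1 \<and> transpose B2 = B2"
proof -
  define Z where "Z = A1 ** A2 - A2 ** A1"
  have "trace Z = 0" and "det Z \<noteq> 0"
    using assms by (simp_all add: Z_def trace_commutator det_commutator_mat2)
  then obtain P \<mu> where "\<mu> \<noteq> 0" and P: "invertible P"
    and Z_conj: "P ** Z ** matrix_inv P = skew2 \<mu>"
    by (rule traceless_mat2_similar_skew2)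
  have conj_symmetric: "transpose (P ** A ** matrix_inv P) = P ** A ** matrix_inv P"
    if "trace (A ** Z) = 0" for A
  proof -
    have "trace ((P ** A ** matrix_inv P) ** skew2 \<mu>) = trace (A ** Z)"
      by (simp only: Z_conj [symmetric] matrix_conj_mult[OF P] trace_matrix_conj[OF P])
    with that show ?thesis
      by (simp add: symmetric_iff_trace_mult_skew2[OF \<open>\<mu> \<noteq> 0\<close>])
  qed
  have "similar_pair (A1, A2) (P ** A1 ** matrix_inv P, P ** A2 ** matrix_inv P)"
    using P by (auto simp: similar_pair_def)
  with conj_symmetric show ?thesis
    using trace_mult_commutator [where A = A1 and B = A2] unfolding Z_def by blast
qed

end
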